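(* Let \(M\) be a torsionfree bornological \(V\)-module. Then the bornological \(V\)-module \(M'\) is nuclear, that is, every subset of \(M\) that is compactoid in \(M\) is also compactoid with respect to the bornology of \(M'\).
   Context: Let \(V\) be a complete discrete valuation ring with uniformiser \(\pi\). A bornology on a set is a collection of subsets (called bounded) containing all finite subsets and closed under finite unions and under taking subsets. A bornological \(V\)-module is a \(V\)-module \(M\) with a bornology such that every bounded subset is contained in a bounded \(V\)-submodule. \(M\) is torsionfree if it is torsionfree as a \(V\)-module and \(\pi^{-1}S=\{x\in M:\pi x\in S\}\) is bounded for every bounded \(S\). A subset \(S\subseteq M\) is compactoid if there is a bounded \(V\)-submodule \(T\subseteq M\) with \(S\subseteq T\) such that for every \(n\in\mathbb N\) there is a finite set \(F_n\subseteq T\) with \(S\subseteq VF_n+\pi^nT\). The compactoid subsets form a bornology; \(M'\) denotes \(M\) with this bornology. A bornological \(V\)-module is nuclear if each of its bounded subsets is compactoid (with respect to its own bornology). *)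

theory Defs
  imports Complex_Main
begin

text \<open>\<open>\<pi>\<close> is a uniformiser of the discrete valuation ring \<open>V\<close> (the ambient type):
  a nonzero non-unit such that every nonzero element is a unit times a power of \<open>\<pi>\<close>.\<close>
definition dvr_uniformiser :: "'v::idom \<Rightarrow> bool" where
  "dvr_uniformiser \<pi> \<longleftrightarrow> \<pi> \<noteq> 0 \<and> \<not> \<pi> dvd 1 \<and>
     (\<forall>x. x \<noteq> 0 \<longrightarrow> (\<exists>u n. u dvd 1 \<and> x = u * \<pi> ^ n))"

definition pi_adically_complete :: "'v::idom \<Rightarrow> bool" where
  "pi_adically_complete \<pi> \<longleftrightarrow>
     (\<forall>a :: nat \<Rightarrow> 'v. (\<forall>n. \<pi> ^ n dvd (a (Suc n) - a n)) \<longrightarrow>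
        (\<exists>l. \<forall>n. \<pi> ^ n dvd (l - a n)))"

definition complete_dvr :: "'v::idom \<Rightarrow> bool" where
  "complete_dvr \<pi> \<longleftrightarrow> dvr_uniformiser \<pi> \<and> pi_adically_complete \<pi>"

definition is_bornology :: "'m set set \<Rightarrow> bool" where
  "is_bornology B \<longleftrightarrow> (\<forall>F. finite F \<longrightarrow> F \<in> B) \<and>
     (\<forall>S\<in>B. \<forall>T\<in>B. S \<union> T \<in> B) \<and> (\<forall>S\<in>B. \<forall>T. T \<subseteq> S \<longrightarrow> T \<in> B)"

definition bornological_module ::
  "('v::comm_ring_1 \<Rightarrow> 'm::ab_group_add \<Rightarrow> 'm) \<Rightarrow> 'm set set \<Rightarrow> bool" where
  "bornological_module scale B \<longleftrightarrow> module scale \<and> is_bornology B \<and>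
     (\<forall>S\<in>B. \<exists>T\<in>B. module.subspace scale T \<and> S \<subseteq> T)"

definition torsionfree_bornological_module ::
  "('v::comm_ring_1 \<Rightarrow> 'm::ab_group_add \<Rightarrow> 'm) \<Rightarrow> 'v \<Rightarrow> 'm set set \<Rightarrow> bool" where
  "torsionfree_bornological_module scale \<pi> B \<longleftrightarrow> bornological_module scale B \<and>
     (\<forall>a x. scale a x = 0 \<longrightarrow> a = 0 \<or> x = 0) \<and>
     (\<forall>S\<in>B. {x. scale \<pi> x \<in> S} \<in> B)"

definition compactoid ::
  "('v::comm_ring_1 \<Rightarrow> 'm::ab_group_add \<Rightarrow> 'm) \<Rightarrow> 'v \<Rightarrow> 'm set set \<Rightarrow> 'm set \<Rightarrow> bool" where
  "compactoid scale \<pi> B S \<longleftrightarrow>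
     (\<exists>T\<in>B. module.subspace scale T \<and> S \<subseteq> T \<and>
        (\<forall>n::nat. \<exists>F. finite F \<and> F \<subseteq> T \<and>
           S \<subseteq> {a + b | a b. a \<in> module.span scale F \<and> b \<in> scale (\<pi> ^ n) ` T}))"

text \<open>The bornology of \<open>M'\<close>: the compactoid subsets.\<close>
definition compactoid_bornology ::
  "('v::comm_ring_1 \<Rightarrow> 'm::ab_group_add \<Rightarrow> 'm) \<Rightarrow> 'v \<Rightarrow> 'm set set \<Rightarrow> 'm set set" where
  "compactoid_bornology scale \<pi> B = {S. compactoid scale \<pi> B S}"

definition nuclear ::
  "('v::comm_ring_1 \<Rightarrow> 'm::ab_group_add \<Rightarrow> 'm) \<Rightarrow> 'v \<Rightarrow> 'm set set \<Rightarrow> bool" where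
  "nuclear scale \<pi> B \<longleftrightarrow> (\<forall>S\<in>B. compactoid scale \<pi> B S)"

end

theory Submission
  imports Defs
begin

(*
  Let S be compactoid in M, witnessed by the bounded submodule T, and put
  Y_m = {t in T. pi^m t in span S}.  The submodule T' spanned by all pi^n Y_(2n)
  lies in T, contains S and is compactoid in M with witness T: each Y_m is
  compactoid in T by torsion-freeness, and the factors pi^n make the pieces
  pi-adically small.  Moreover S is compactoid with witness T': writing
  s = e + pi^(2n) t with e in the span of finitely many elements of S, the element
  t lies in Y_(2n), so pi^(2n) t lies in pi^n T'.  That the finite approximating
  sets can be chosen inside the set being approximated uses that every ideal of V
  is generated by a power of pi.
*)

definition compactoid_in ::
  "('v::comm_ring_1 \<Rightarrow> 'm::ab_group_add \<Rightarrow> 'm) \<Rightarrow> 'v \<Rightarrow> 'm set \<Rightarrow> 'm set \<Rightarrow> bool" where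
  "compactoid_in scale \<pi> T S \<longleftrightarrow>
     (\<forall>n. \<exists>F. finite F \<and> F \<subseteq> T \<and> S \<subseteq> module.span scale (F \<union> scale (\<pi> ^ n) ` T))"

definition compactoid_hull ::
  "('v::comm_ring_1 \<Rightarrow> 'm::ab_group_add \<Rightarrow> 'm) \<Rightarrow> 'v \<Rightarrow> 'm set \<Rightarrow> 'm set \<Rightarrow> 'm set" where
  "compactoid_hull scale \<pi> T S = module.span scale
     (\<Union>n. scale (\<pi> ^ n) ` {t \<in> T. scale (\<pi> ^ (2 * n)) t \<in> module.span scale S})"

context module
begin

lemma module_hom_scale: "module_hom scale scale (scale c)"
  using module_axioms unfolding module_hom_iff
  by (simp add: scale_right_distrib scale_left_commute mult.commute)

lemma subspace_scale_image: "subspace T \<Longrightarrow> subspace (scale c ` T)"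
  by (rule module_hom.subspace_image[OF module_hom_scale])

lemma span_scale_image: "span (scale c ` A) = scale c ` span A"
  by (rule module_hom.span_image[OF module_hom_scale])

lemma scale_image_scale_image_subset:
  assumes "subspace T"
  shows "scale a ` scale b ` T \<subseteq> scale b ` T"
proof
  fix x assume "x \<in> scale a ` scale b ` T"
  then obtain t where "t \<in> T" "x = scale b (scale a t)"
    by (auto simp only: scale_left_commute)
  then show "x \<in> scale b ` T" using assms subspace_scale by blast
qed

lemma set_plus_span_subspace:
  assumes "subspace Q"
  shows "{a + b | a b. a \<in> span F \<and> b \<in> Q} = span (F \<union> Q)"
  using assms by (simp add: span_Un span_eq_iff[THEN iffD2])

lemma span_finite_subset:
  assumes "x \<in> span X"
  obtains t where "finite t" "t \<subseteq> X" "x \<in> span t"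
proof -
  from assms obtain t r where "finite t" "t \<subseteq> X" "x = (\<Sum>a\<in>t. scale (r a) a)"
    unfolding span_explicit by blast
  moreover have "x \<in> span t"
    unfolding \<open>x = _\<close> by (intro span_sum span_scale span_base)
  ultimately show thesis using that by blast
qed

lemma span_scale_coefficient:
  assumes "x \<in> span X" "x - scale a g \<in> span P"
  shows "\<exists>y\<in>span X. y - scale (c * a) g \<in> span P"
proof
  show "scale c x \<in> span X" using assms(1) by (rule span_scale)
  have "scale c x - scale (c * a) g = scale c (x - scale a g)"
    by (simp add: scale_right_diff_distrib)
  also have "\<dots> \<in> span P" using assms(2) by (rule span_scale)
  finally show "scale c x - scale (c * a) g \<in> span P" .
qed

lemma compactoid_iff_compactoid_in:
  "compactoid scale \<pi> B S \<longleftrightarrow> (\<exists>T\<in>B. subspace T \<and> S \<subseteq> T \<and> compactoid_in scale \<pi> T S)"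
  unfolding compactoid_def compactoid_in_def
  by (intro bex_cong conj_cong refl all_cong ex_cong) (simp add: set_plus_span_subspace subspace_scale_image)

lemma compactoid_in_span:
  assumes "compactoid_in scale \<pi> T S"
  shows "compactoid_in scale \<pi> T (span S)"
  using assms unfolding compactoid_in_def by (meson span_minimal subspace_span)

lemma compactoid_in_span_UN_scale_power:
  assumes T: "subspace T" and Z: "\<And>n. Z n \<subseteq> T" "\<And>n. compactoid_in scale \<pi> T (Z n)"
  shows "compactoid_in scale \<pi> T (span (\<Union>n. scale (\<pi> ^ n) ` Z n))"
  unfolding compactoid_in_def
proof
  fix k
  have "\<forall>n. \<exists>F. finite F \<and> F \<subseteq> T \<and> Z n \<subseteq> span (F \<union> scale (\<pi> ^ k) ` T)"
    using Z(2) unfolding compactoid_in_def by blast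
  then obtain G where G: "\<And>n. finite (G n)" "\<And>n. G n \<subseteq> T"
    "\<And>n. Z n \<subseteq> span (G n \<union> scale (\<pi> ^ k) ` T)"
    by metis
  define H where "H = (\<Union>n<k. scale (\<pi> ^ n) ` G n)"
  have "finite H" by (simp add: H_def G(1))
  moreover have "H \<subseteq> T" unfolding H_def using G(2) subspace_scale[OF T] by blast
  moreover have "scale (\<pi> ^ n) z \<in> span (H \<union> scale (\<pi> ^ k) ` T)" if "z \<in> Z n" for n z
  proof (cases "n < k")
    case True
    have "scale (\<pi> ^ n) ` G n \<subseteq> H" unfolding H_def using True by blast
    then have "scale (\<pi> ^ n) ` (G n \<union> scale (\<pi> ^ k) ` T) \<subseteq> H \<union> scale (\<pi> ^ k) ` T"
      unfolding image_Un by (intro Un_mono scale_image_scale_image_subset[OF T])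
    moreover have "scale (\<pi> ^ n) z \<in> span (scale (\<pi> ^ n) ` (G n \<union> scale (\<pi> ^ k) ` T))"
      using G(3) that unfolding span_scale_image by blast
    ultimately show ?thesis by (meson span_mono subsetD)
  next
    case False
    then have "scale (\<pi> ^ n) z = scale (\<pi> ^ k) (scale (\<pi> ^ (n - k)) z)"
      by (simp flip: power_add)
    moreover have "scale (\<pi> ^ (n - k)) z \<in> T" using that Z(1) subspace_scale[OF T] by blast
    ultimately show ?thesis by (blast intro: span_base)
  qed
  then have "span (\<Union>n. scale (\<pi> ^ n) ` Z n) \<subseteq> span (H \<union> scale (\<pi> ^ k) ` T)"
    by (intro span_minimal subspace_span) blast
  ultimately show "\<exists>F. finite F \<and> F \<subseteq> T \<and>
      span (\<Union>n. scale (\<pi> ^ n) ` Z n) \<subseteq> span (F \<union> scale (\<pi> ^ k) ` T)"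
    by blast
qed

end

lemma uniformiser_unit_times_power:
  assumes "dvr_uniformiser \<pi>" and "a \<noteq> 0"
  obtains v w k where "a = v * \<pi> ^ k" "w * a = \<pi> ^ k"
proof -
  from assms obtain v k where "v dvd 1" "a = v * \<pi> ^ k"
    unfolding dvr_uniformiser_def by blast
  moreover from \<open>v dvd 1\<close> obtain w where "1 = v * w" by (rule dvdE)
  ultimately have "w * a = \<pi> ^ k" by (simp add: algebra_simps)
  with \<open>a = v * \<pi> ^ k\<close> show thesis by (rule that)
qed

lemma uniformiser_power_generator:
  fixes \<pi> :: "'v::idom"
  assumes \<pi>: "dvr_uniformiser \<pi>" and I: "\<And>a c. a \<in> I \<Longrightarrow> c * a \<in> I" and "a \<in> I" "a \<noteq> 0"
  obtains n where "\<pi> ^ n \<in> I" "\<And>b. b \<in> I \<Longrightarrow> \<pi> ^ n dvd b"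
proof
  have power_in_I: "\<exists>k. \<pi> ^ k \<in> I \<and> \<pi> ^ k dvd b" if "b \<in> I" "b \<noteq> 0" for b
  proof -
    obtain v w k where "b = v * \<pi> ^ k" "w * b = \<pi> ^ k"
      using uniformiser_unit_times_power[OF \<pi> \<open>b \<noteq> 0\<close>] .
    have "\<pi> ^ k \<in> I" using I[OF \<open>b \<in> I\<close>, of w] \<open>w * b = \<pi> ^ k\<close> by simp
    moreover have "\<pi> ^ k dvd b" using \<open>b = v * \<pi> ^ k\<close> by simp
    ultimately show ?thesis by blast
  qed
  define n where "n = (LEAST n. \<pi> ^ n \<in> I)"
  show "\<pi> ^ n \<in> I"
    unfolding n_def by (rule LeastI_ex) (use power_in_I \<open>a \<in> I\<close> \<open>a \<noteq> 0\<close> in blast)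
  show "\<pi> ^ n dvd b" if "b \<in> I" for b
  proof (cases "b = 0")
    case False
    then obtain k where "\<pi> ^ k \<in> I" "\<pi> ^ k dvd b" using power_in_I \<open>b \<in> I\<close> by blast
    moreover from \<open>\<pi> ^ k \<in> I\<close> have "n \<le> k" unfolding n_def by (rule Least_le)
    ultimately show ?thesis using le_imp_power_dvd dvd_trans by blast
  qed simp
qed

locale dvr_module = module scale for scale :: "'v::idom \<Rightarrow> 'm::ab_group_add \<Rightarrow> 'm" +
  fixes \<pi> :: 'v
  assumes uniformiser: "dvr_uniformiser \<pi>"
begin

lemma span_Int_span_insert_subset:
  assumes E: "span X \<inter> span (F \<union> Q) \<subseteq> span (E \<union> Q)"
  obtains t where "finite t" "t \<subseteq> X" "span X \<inter> span (insert g F \<union> Q) \<subseteq> span (E \<union> t \<union> Q)"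
proof -
  define I where "I = {a. \<exists>x\<in>span X. x - scale a g \<in> span (F \<union> Q)}"
  have I_mult: "c * a \<in> I" if "a \<in> I" for a c
    using that span_scale_coefficient unfolding I_def by blast
  have breakdown: "\<exists>a\<in>I. x - scale a g \<in> span (F \<union> Q)"
    if "x \<in> span X \<inter> span (insert g F \<union> Q)" for x
    using that span_breakdown_eq[of x g "F \<union> Q"] unfolding I_def by auto
  show thesis
  proof (cases "I \<subseteq> {0}")
    case True
    then have "span X \<inter> span (insert g F \<union> Q) \<subseteq> span (E \<union> {} \<union> Q)"
      using breakdown E by fastforce
    then show thesis by (rule that[rotated 2]) simp_all
  next
    case False
    text \<open>A single \<open>x\<^sub>0\<close> whose \<open>g\<close>-coefficient generates the ideal \<open>I\<close> accounts for \<open>g\<close>.\<close>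
    then obtain a where "a \<in> I" "a \<noteq> 0" by blast
    then obtain n where "\<pi> ^ n \<in> I" and I_dvd: "\<And>b. b \<in> I \<Longrightarrow> \<pi> ^ n dvd b"
      using uniformiser_power_generator[OF uniformiser I_mult] by blast
    then obtain x0 where x0: "x0 \<in> span X" "x0 - scale (\<pi> ^ n) g \<in> span (F \<union> Q)"
      unfolding I_def by blast
    then obtain t where t: "finite t" "t \<subseteq> X" "x0 \<in> span t"
      using span_finite_subset by blast
    have "x \<in> span (E \<union> t \<union> Q)" if x: "x \<in> span X \<inter> span (insert g F \<union> Q)" for x
    proof -
      obtain a where "a \<in> I" and a: "x - scale a g \<in> span (F \<union> Q)"
        using breakdown[OF x] by blast
      then obtain c where c: "a = c * \<pi> ^ n" using I_dvd by (metis dvdE mult.commute)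
      have "x - scale c x0 = (x - scale a g) - scale c (x0 - scale (\<pi> ^ n) g)"
        unfolding c by (simp add: scale_right_diff_distrib)
      then have "x - scale c x0 \<in> span X \<inter> span (F \<union> Q)"
        using x x0 a by (metis IntD1 IntI span_diff span_scale)
      then have "x - scale c x0 \<in> span (E \<union> t \<union> Q)"
        using E span_mono[of "E \<union> Q" "E \<union> t \<union> Q"] by blast
      moreover have "scale c x0 \<in> span (E \<union> t \<union> Q)"
        using t(3) span_mono[of t "E \<union> t \<union> Q"] span_scale by blast
      ultimately show ?thesis by (metis diff_add_cancel span_add)
    qed
    with t(1,2) show thesis by (intro that) auto
  qed
qed

lemma finite_subset_span_Int_span_Un:
  assumes "finite F"
  shows "\<exists>E. finite E \<and> E \<subseteq> X \<and> span X \<inter> span (F \<union> Q) \<subseteq> span (E \<union> Q)"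
  using assms
proof (induction F)
  case empty
  then show ?case by (intro exI[of _ "{}"]) auto
next
  case (insert g F)
  then obtain E where E: "finite E" "E \<subseteq> X" "span X \<inter> span (F \<union> Q) \<subseteq> span (E \<union> Q)"
    by blast
  obtain t where "finite t" "t \<subseteq> X" "span X \<inter> span (insert g F \<union> Q) \<subseteq> span (E \<union> t \<union> Q)"
    using span_Int_span_insert_subset[OF E(3)] .
  with E(1,2) show ?case by (intro exI[of _ "E \<union> t"]) auto
qed

lemma compactoid_in_finite_subset:
  assumes "compactoid_in scale \<pi> T S"
  obtains E where "finite E" "E \<subseteq> S" "S \<subseteq> span (E \<union> scale (\<pi> ^ n) ` T)"
proof -
  from assms obtain F where "finite F" "S \<subseteq> span (F \<union> scale (\<pi> ^ n) ` T)"
    unfolding compactoid_in_def by blast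
  moreover obtain E where "finite E" "E \<subseteq> S"
    "span S \<inter> span (F \<union> scale (\<pi> ^ n) ` T) \<subseteq> span (E \<union> scale (\<pi> ^ n) ` T)"
    using finite_subset_span_Int_span_Un[OF \<open>finite F\<close>, of S] by blast
  moreover note span_superset[of S]
  ultimately have "S \<subseteq> span (E \<union> scale (\<pi> ^ n) ` T)" by blast
  with \<open>finite E\<close> \<open>E \<subseteq> S\<close> show thesis by (rule that)
qed

lemma finite_subset_span_Un_cancel_scale:
  assumes inj: "inj (scale c)" and "finite F" and Y: "scale c ` Y \<subseteq> span (F \<union> scale c ` Q)"
  obtains G where "finite G" "G \<subseteq> Y" "Y \<subseteq> span (G \<union> Q)"
proof -
  obtain E where E: "finite E" "E \<subseteq> scale c ` Y"
    "span (scale c ` Y) \<inter> span (F \<union> scale c ` Q) \<subseteq> span (E \<union> scale c ` Q)"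
    using finite_subset_span_Int_span_Un[OF \<open>finite F\<close>, of "scale c ` Y"] by blast
  then obtain G where G: "finite G" "G \<subseteq> Y" "E = scale c ` G"
    by (meson finite_subset_image)
  have "scale c ` Y \<subseteq> span (scale c ` (G \<union> Q))"
    using Y E(3) span_superset[of "scale c ` Y"] unfolding G(3) image_Un by blast
  then have "Y \<subseteq> span (G \<union> Q)"
    by (simp add: span_scale_image inj_image_subset_iff[OF inj])
  with G(1,2) show thesis by (rule that)
qed

lemma compactoid_in_scale_preimage:
  assumes inj: "inj (scale (\<pi> ^ m))" and S: "compactoid_in scale \<pi> T S"
  shows "compactoid_in scale \<pi> T {t \<in> T. scale (\<pi> ^ m) t \<in> span S}"
  unfolding compactoid_in_def
proof
  fix k
  let ?Y = "{t \<in> T. scale (\<pi> ^ m) t \<in> span S}"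
  obtain F where "finite F" "span S \<subseteq> span (F \<union> scale (\<pi> ^ (k + m)) ` T)"
    using compactoid_in_span[OF S] unfolding compactoid_in_def by blast
  moreover have "scale (\<pi> ^ (k + m)) ` T = scale (\<pi> ^ m) ` scale (\<pi> ^ k) ` T"
    by (simp add: image_image power_add mult.commute)
  ultimately have "scale (\<pi> ^ m) ` ?Y \<subseteq> span (F \<union> scale (\<pi> ^ m) ` scale (\<pi> ^ k) ` T)"
    by auto
  then obtain G where "finite G" "G \<subseteq> ?Y" "?Y \<subseteq> span (G \<union> scale (\<pi> ^ k) ` T)"
    by (rule finite_subset_span_Un_cancel_scale[OF inj \<open>finite F\<close>])
  then show "\<exists>G. finite G \<and> G \<subseteq> T \<and> ?Y \<subseteq> span (G \<union> scale (\<pi> ^ k) ` T)"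
    by blast
qed

lemma compactoid_hull_subset:
  assumes "subspace T"
  shows "compactoid_hull scale \<pi> T S \<subseteq> T"
  unfolding compactoid_hull_def
  by (rule span_minimal[OF _ assms]) (use subspace_scale[OF assms] in blast)

lemma subset_compactoid_hull:
  assumes "S \<subseteq> T"
  shows "S \<subseteq> compactoid_hull scale \<pi> T S"
proof
  fix s assume "s \<in> S"
  then have "s \<in> {t \<in> T. scale (\<pi> ^ (2 * 0)) t \<in> span S}"
    using assms span_base by auto
  then have "s \<in> (\<Union>n. scale (\<pi> ^ n) ` {t \<in> T. scale (\<pi> ^ (2 * n)) t \<in> span S})"
    by (intro UN_I[of 0]) auto
  then show "s \<in> compactoid_hull scale \<pi> T S"
    unfolding compactoid_hull_def by (rule span_base)
qed

lemma compactoid_in_compactoid_hull: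
  assumes inj: "\<And>m. inj (scale (\<pi> ^ m))" and T: "subspace T" and S: "compactoid_in scale \<pi> T S"
  shows "compactoid_in scale \<pi> T (compactoid_hull scale \<pi> T S)"
  unfolding compactoid_hull_def
  by (rule compactoid_in_span_UN_scale_power[OF T])
    (auto intro: compactoid_in_scale_preimage[OF inj S])

lemma compactoid_in_compactoid_hull_self:
  assumes T: "subspace T" and "S \<subseteq> T" and S: "compactoid_in scale \<pi> T S"
  shows "compactoid_in scale \<pi> (compactoid_hull scale \<pi> T S) S"
  unfolding compactoid_in_def
proof
  fix n
  obtain E where E: "finite E" "E \<subseteq> S" "S \<subseteq> span (E \<union> scale (\<pi> ^ (2 * n)) ` T)"
    using compactoid_in_finite_subset[OF S] .
  have "s \<in> span (E \<union> scale (\<pi> ^ n) ` compactoid_hull scale \<pi> T S)" if "s \<in> S" for s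
  proof -
    obtain e t where e: "e \<in> span E" and "t \<in> T" and s: "s = e + scale (\<pi> ^ (2 * n)) t"
      using E(3) \<open>s \<in> S\<close>
      unfolding set_plus_span_subspace[OF subspace_scale_image[OF T], symmetric] by blast
    have "scale (\<pi> ^ (2 * n)) t = s - e" using s by simp
    also have "\<dots> \<in> span S"
      using \<open>s \<in> S\<close> e span_mono[OF E(2)] by (blast intro: span_diff span_base)
    finally have "scale (\<pi> ^ n) t \<in> compactoid_hull scale \<pi> T S"
      unfolding compactoid_hull_def using \<open>t \<in> T\<close> by (blast intro: span_base)
    moreover have "scale (\<pi> ^ (2 * n)) t = scale (\<pi> ^ n) (scale (\<pi> ^ n) t)"
      by (simp add: mult_2 power_add)
    ultimately have "scale (\<pi> ^ (2 * n)) t \<in> span (E \<union> scale (\<pi> ^ n) ` compactoid_hull scale \<pi> T S)"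
      by (blast intro: span_base)
    moreover have "e \<in> span (E \<union> scale (\<pi> ^ n) ` compactoid_hull scale \<pi> T S)"
      using e span_mono[of E] by blast
    ultimately show ?thesis unfolding s by (rule span_add[rotated])
  qed
  then show "\<exists>F. finite F \<and> F \<subseteq> compactoid_hull scale \<pi> T S \<and>
      S \<subseteq> span (F \<union> scale (\<pi> ^ n) ` compactoid_hull scale \<pi> T S)"
    using E(1,2) subset_compactoid_hull[OF \<open>S \<subseteq> T\<close>] by blast
qed

end

theorem proposition3p7:
  fixes \<pi> :: "'v::idom"
    and scale :: "'v \<Rightarrow> 'm::ab_group_add \<Rightarrow> 'm"
    and B :: "'m set set"
  assumes "complete_dvr \<pi>"
    and "torsionfree_bornological_module scale \<pi> B"
  shows "nuclear scale \<pi> (compactoid_bornology scale \<pi> B)"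
proof -
  from assms(2) have "module scale" and torsionfree: "\<And>a x. scale a x = 0 \<Longrightarrow> a = 0 \<or> x = 0"
    unfolding torsionfree_bornological_module_def bornological_module_def by blast+
  interpret dvr_module scale \<pi>
    using \<open>module scale\<close> assms(1) by (simp add: dvr_module_def dvr_module_axioms_def complete_dvr_def)
  have "\<pi> \<noteq> 0" using uniformiser unfolding dvr_uniformiser_def by blast
  then have inj: "inj (scale (\<pi> ^ m))" for m
    using torsionfree unfolding module_hom.inj_iff_eq_0[OF module_hom_scale]
    by (metis power_not_zero)
  show ?thesis
    unfolding nuclear_def compactoid_bornology_def
  proof
    fix S assume "S \<in> {S. compactoid scale \<pi> B S}"
    then obtain T where T: "T \<in> B" "subspace T" "S \<subseteq> T" "compactoid_in scale \<pi> T S"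
      by (auto simp: compactoid_iff_compactoid_in)
    let ?T' = "compactoid_hull scale \<pi> T S"
    have "compactoid scale \<pi> B ?T'"
      unfolding compactoid_iff_compactoid_in
      using T compactoid_hull_subset compactoid_in_compactoid_hull[OF inj] by blast
    moreover have "subspace ?T'" by (simp add: compactoid_hull_def)
    ultimately show "compactoid scale \<pi> {S. compactoid scale \<pi> B S} S"
      unfolding compactoid_iff_compactoid_in
      using T subset_compactoid_hull compactoid_in_compactoid_hull_self by blast
  qed
qed

end
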